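(* Let $R$ be a discrete valuation ring and let $G$ be a group acting on $R$ by ring automorphisms. Then the invariant ring $R^G=\{r\in R:\ g(r)=r\text{ for all } g\in G\}$ is either a field or a discrete valuation ring; in particular, $R^G$ is noetherian. *)

theory Defs
  imports "HOL-Algebra.Algebra"
begin

definition DVR :: "('a, 'b) ring_scheme \<Rightarrow> bool" where
  "DVR R \<longleftrightarrow> principal_domain R \<and> (\<exists>!P. primeideal P R \<and> P \<noteq> {\<zero>\<^bsub>R\<^esub>})"

definition invariant_ring ::
  "('g, 'c) monoid_scheme \<Rightarrow> ('a, 'b) ring_scheme \<Rightarrow> ('g \<Rightarrow> 'a \<Rightarrow> 'a) \<Rightarrow> ('a, 'b) ring_scheme" where
  "invariant_ring G R \<phi> =
     R\<lparr>carrier := {r \<in> carrier R. \<forall>g \<in> carrier G. \<phi> g r = r}\<rparr>"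

end

theory Submission
  imports Defs
begin

text \<open>A discrete valuation ring R is a valuation ring: of any two elements, one divides
  the other. The invariant subring C is closed under quotients in R (if x = y z with x, y
  invariant and y \<noteq> 0, cancelling y in g(y) g(z) = y z gives g(z) = z), so divisibility in C
  is the restriction of divisibility in R and C is again a valuation ring. Each ideal I of C
  is principal: the ideals aR, a \<in> I, form a chain, which has a largest member since R is
  noetherian, and its generator generates I. Finally, in a principal valuation domain any two
  nonzero prime ideals are comparable, hence equal, so C is a field or a DVR.\<close>

definition divides_total :: "('a, 'b) ring_scheme \<Rightarrow> bool" where
  "divides_total R \<longleftrightarrow> (\<forall>x \<in> carrier R. \<forall>y \<in> carrier R. x divides\<^bsub>R\<^esub> y \<or> y divides\<^bsub>R\<^esub> x)"

text \<open>For a subring C of a domain R this says C = Frac(C) \<inter> R.\<close>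
definition quotient_closed :: "('a, 'b) ring_scheme \<Rightarrow> 'a set \<Rightarrow> bool" where
  "quotient_closed R C \<longleftrightarrow>
     (\<forall>x \<in> C. \<forall>y \<in> C - {\<zero>\<^bsub>R\<^esub>}. \<forall>z \<in> carrier R. x = y \<otimes>\<^bsub>R\<^esub> z \<longrightarrow> z \<in> C)"

context principal_domain
begin

lemma nonunit_mem_unique_nonzero_primeideal:
  assumes P: "primeideal P R"
    and unique: "\<And>Q. primeideal Q R \<Longrightarrow> Q \<noteq> {\<zero>} \<Longrightarrow> Q = P"
    and a: "a \<in> carrier R" "a \<notin> Units R"
  shows "a \<in> P"
proof (cases "a = \<zero>")
  case True
  then show ?thesis
    using P by (simp add: additive_subgroup.zero_closed ideal.axioms(1) primeideal.axioms(1))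
next
  case False
  then obtain b where b: "b \<in> carrier R" "ring_irreducible b" "b divides a"
    using exists_irreducible_divisor[of a] a by blast
  have "primeideal (PIdl b) R"
    using maximalideal_prime[OF irreducible_imp_maximalideal[OF b(1,2)]] .
  moreover have "PIdl b \<noteq> {\<zero>}"
    using cgenideal_self[OF b(1)] b(2) by (auto simp: ring_irreducible_def)
  ultimately have "PIdl b = P"
    using unique by blast
  moreover have "a \<in> PIdl b"
    using to_contain_is_to_divide[OF b(1) a(1)] b(3) cgenideal_self[OF a(1)] by blast
  ultimately show ?thesis
    by simp
qed

lemma divides_total_if_nonunits_in_ideal:
  assumes P: "ideal P R" "P \<noteq> carrier R"
    and nonunits: "\<And>a. a \<in> carrier R \<Longrightarrow> a \<notin> Units R \<Longrightarrow> a \<in> P"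
  shows "divides_total R"
  unfolding divides_total_def
proof (intro ballI)
  fix x y assume x: "x \<in> carrier R" and y: "y \<in> carrier R"
  obtain d where d: "d \<in> carrier R" "PIdl d = PIdl x <+>\<^bsub>R\<^esub> PIdl y"
    using exists_gen[OF add_ideals[OF cgenideal_ideal[OF x] cgenideal_ideal[OF y]]] by metis
  then have "d gcdof x y"
    using ideal_sum_iff_gcd[OF x y d(1)] by simp
  then obtain a b where ab: "a \<in> carrier R" "x = d \<otimes> a" "b \<in> carrier R" "y = d \<otimes> b"
    unfolding isgcd_def factor_def by blast
  have "d \<in> PIdl x <+>\<^bsub>R\<^esub> PIdl y"
    using d cgenideal_self[OF d(1)] by simp
  then obtain u v where uv: "u \<in> carrier R" "v \<in> carrier R" "d = u \<otimes> x \<oplus> v \<otimes> y"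
    unfolding set_add_def' cgenideal_def by blast
  show "x divides y \<or> y divides x"
  proof (cases "d = \<zero>")
    case True
    then show ?thesis
      using ab divides_zero by simp
  next
    case False
    have "d \<otimes> (u \<otimes> a \<oplus> v \<otimes> b) = d \<otimes> \<one>"
      using uv ab d(1) by (simp add: r_distr m_lcomm)
    then have bezout: "u \<otimes> a \<oplus> v \<otimes> b = \<one>"
      using m_lcancel[OF False d(1)] uv(1,2) ab(1,3) by simp
    have "a \<in> Units R \<or> b \<in> Units R"
    proof (rule ccontr)
      assume "\<not> ?thesis"
      then have "u \<otimes> a \<oplus> v \<otimes> b \<in> P"
        using nonunits ab uv P(1)
        by (meson ideal.I_l_closed additive_subgroup.a_closed ideal.axioms(1))
      then show False
        using bezout ideal.one_imp_carrier[OF P(1)] P(2) by simp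
    qed
    then show ?thesis
      using ab d(1) unit_divides divides_mult_lI Units_closed by metis
  qed
qed

end

lemma DVR_divides_total:
  assumes "DVR R"
  shows "divides_total R"
proof -
  interpret principal_domain R
    using assms unfolding DVR_def by blast
  obtain P where P: "primeideal P R"
    and unique: "\<And>Q. primeideal Q R \<Longrightarrow> Q \<noteq> {\<zero>\<^bsub>R\<^esub>} \<Longrightarrow> Q = P"
    using assms unfolding DVR_def by blast
  show ?thesis
    using divides_total_if_nonunits_in_ideal[OF primeideal.axioms(1)[OF P] primeideal.I_notcarr[OF P, THEN not_sym]]
      nonunit_mem_unique_nonzero_primeideal[OF P unique] by blast
qed

lemma (in ring) divides_in_quotient_closed_subring:
  assumes C: "subring C R" "quotient_closed R C"
    and xy: "x \<in> C" "y \<in> C" "x divides y"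
  shows "x divides\<^bsub>R\<lparr>carrier := C\<rparr>\<^esub> y"
proof -
  obtain z where z: "z \<in> carrier R" "y = x \<otimes> z"
    using xy(3) unfolding factor_def by blast
  have "\<exists>w \<in> C. y = x \<otimes> w"
  proof (cases "x = \<zero>")
    case True
    then show ?thesis
      using z subringE(2)[OF C(1)] by (intro bexI[of _ \<zero>]) auto
  next
    case False
    then show ?thesis
      using C(2) xy(1,2) z unfolding quotient_closed_def by blast
  qed
  then show ?thesis
    unfolding factor_def by simp
qed

lemma (in ring) divides_total_quotient_closed_subring:
  assumes "divides_total R" "subring C R" "quotient_closed R C"
  shows "divides_total (R\<lparr>carrier := C\<rparr>)"
  unfolding divides_total_def
proof (intro ballI)
  fix x y assume "x \<in> carrier (R\<lparr>carrier := C\<rparr>)" "y \<in> carrier (R\<lparr>carrier := C\<rparr>)"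
  then have xy: "x \<in> C" "y \<in> C"
    by simp_all
  then have "x divides y \<or> y divides x"
    using assms(1) subringE(1)[OF assms(2)] unfolding divides_total_def by blast
  then show "x divides\<^bsub>R\<lparr>carrier := C\<rparr>\<^esub> y \<or> y divides\<^bsub>R\<lparr>carrier := C\<rparr>\<^esub> x"
    using divides_in_quotient_closed_subring[OF assms(2,3)] xy by blast
qed

lemma (in noetherian_domain) principal_domain_quotient_closed_subring:
  assumes total: "divides_total R" and C: "subring C R" "quotient_closed R C"
  shows "principal_domain (R\<lparr>carrier := C\<rparr>)"
proof (intro principal_domain.intro principal_domain_axioms.intro)
  let ?S = "R\<lparr>carrier := C\<rparr>"
  show "domain ?S"
    using C(1) by (rule subring_is_domain)
  fix I assume I: "ideal I ?S"
  have IC: "I \<subseteq> C"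
    using ideal.Icarr[OF I] by auto
  have "I \<noteq> {}"
    using additive_subgroup.zero_closed[OF ideal.axioms(1)[OF I]] by auto
  moreover have "subset.chain {J. ideal J R} ((\<lambda>x. PIdl x) ` I)"
  proof -
    have "(\<lambda>x. PIdl x) ` I \<subseteq> {J. ideal J R}"
      using IC subringE(1)[OF C(1)] cgenideal_ideal by blast
    moreover have "PIdl x \<subseteq> PIdl y \<or> PIdl y \<subseteq> PIdl x" if "x \<in> I" "y \<in> I" for x y
    proof -
      have "x \<in> carrier R" "y \<in> carrier R"
        using that IC subringE(1)[OF C(1)] by auto
      then show ?thesis
        using total to_contain_is_to_divide unfolding divides_total_def by blast
    qed
    ultimately show ?thesis
      unfolding pred_on.chain_def by blast
  qed
  ultimately have "\<Union>((\<lambda>x. PIdl x) ` I) \<in> (\<lambda>x. PIdl x) ` I"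
    by (intro ideal_chain_is_trivial) auto
  then obtain a where a: "a \<in> I" "\<And>y. y \<in> I \<Longrightarrow> PIdl y \<subseteq> PIdl a"
    by blast
  have "I = PIdl\<^bsub>?S\<^esub> a"
  proof
    show "I \<subseteq> PIdl\<^bsub>?S\<^esub> a"
    proof
      fix y assume y: "y \<in> I"
      have aR: "a \<in> carrier R" and yR: "y \<in> carrier R"
        using a(1) y IC subringE(1)[OF C(1)] by auto
      have "a divides y"
        using a(2)[OF y] to_contain_is_to_divide[OF aR yR] by blast
      then have "a divides\<^bsub>?S\<^esub> y"
        using divides_in_quotient_closed_subring[OF C] a(1) y IC by blast
      then obtain z where z: "z \<in> C" "y = a \<otimes> z"
        unfolding factor_def by auto
      then have "y = z \<otimes> a"
        using aR subringE(1)[OF C(1)] m_comm by blast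
      then show "y \<in> PIdl\<^bsub>?S\<^esub> a"
        unfolding cgenideal_def using z(1) by auto
    qed
    show "PIdl\<^bsub>?S\<^esub> a \<subseteq> I"
    proof
      fix y assume "y \<in> PIdl\<^bsub>?S\<^esub> a"
      then obtain z where "z \<in> C" "y = z \<otimes> a"
        unfolding cgenideal_def by auto
      then show "y \<in> I"
        using ideal.I_l_closed[OF I a(1)] by simp
    qed
  qed
  then show "\<exists>a \<in> carrier ?S. I = PIdl\<^bsub>?S\<^esub> a"
    using a(1) IC by auto
qed

lemma (in domain) primeideal_PIdl_subset_imp_eq:
  assumes p: "p \<in> carrier R" "p \<noteq> \<zero>" "primeideal (PIdl p) R"
    and q: "q \<in> carrier R" "primeideal (PIdl q) R"
    and sub: "PIdl p \<subseteq> PIdl q"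
  shows "PIdl p = PIdl q"
proof -
  obtain r where r: "r \<in> carrier R" "p = q \<otimes> r"
    using sub to_contain_is_to_divide[OF q(1) p(1)] unfolding factor_def by blast
  then have "q \<in> PIdl p \<or> r \<in> PIdl p"
    using primeideal.I_prime[OF p(3) q(1) r(1)] cgenideal_self[OF p(1)] by simp
  then show ?thesis
  proof
    assume "q \<in> PIdl p"
    then show ?thesis
      using sub cgenideal_minimal[OF cgenideal_ideal[OF p(1)]] by blast
  next
    assume "r \<in> PIdl p"
    then obtain s where s: "s \<in> carrier R" "r = s \<otimes> p"
      unfolding cgenideal_def by blast
    have "p \<otimes> (q \<otimes> s) = q \<otimes> (s \<otimes> p)"
      using p(1) q(1) s(1) by (simp add: m_ac)
    also have "\<dots> = p"
      using r(2) unfolding s(2) by (rule sym)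
    finally have "p \<otimes> (q \<otimes> s) = p \<otimes> \<one>"
      using p(1) by simp
    then have "q \<otimes> s = \<one>"
      using m_lcancel[OF p(2) p(1)] q(1) s(1) by simp
    then have "q \<in> Units R"
      using q(1) s(1) m_comm[OF q(1) s(1)] unfolding Units_def by auto
    then show ?thesis
      using ideal_eq_carrier_iff[OF q(1)] primeideal.I_notcarr[OF q(2)] by simp
  qed
qed

lemma (in principal_domain) field_or_DVR_if_divides_total:
  assumes total: "divides_total R"
  shows "field R \<or> DVR R"
proof (cases "carrier R - {\<zero>} \<subseteq> Units R")
  case True
  then have "field R"
    by (intro field_intro2) auto
  then show ?thesis ..
next
  case False
  then obtain t where t: "t \<in> carrier R - {\<zero>}" "t \<notin> Units R"
    by blast
  then obtain b where b: "b \<in> carrier R" "ring_irreducible b"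
    using exists_irreducible_divisor by blast
  have "primeideal (PIdl b) R"
    using maximalideal_prime[OF irreducible_imp_maximalideal[OF b]] .
  moreover have "PIdl b \<noteq> {\<zero>}"
    using cgenideal_self[OF b(1)] b(2) by (auto simp: ring_irreducible_def)
  moreover have "Q = Q'"
    if Q: "primeideal Q R" "Q \<noteq> {\<zero>}" and Q': "primeideal Q' R" "Q' \<noteq> {\<zero>}" for Q Q'
  proof -
    obtain p q where pq: "p \<in> carrier R" "Q = PIdl p" "q \<in> carrier R" "Q' = PIdl q"
      using exists_gen primeideal.axioms(1) Q(1) Q'(1) by metis
    have "p \<noteq> \<zero>" "q \<noteq> \<zero>"
      using pq(2,4) Q(2) Q'(2) cgenideal_eq_genideal[OF zero_closed] genideal_zero by auto
    moreover have "PIdl p \<subseteq> PIdl q \<or> PIdl q \<subseteq> PIdl p"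
      using total pq to_contain_is_to_divide unfolding divides_total_def by blast
    ultimately show ?thesis
      using primeideal_PIdl_subset_imp_eq pq Q(1) Q'(1) by metis
  qed
  ultimately show ?thesis
    unfolding DVR_def using principal_domain_axioms by blast
qed

lemma DVR_quotient_closed_subring:
  assumes "DVR R" "subring C R" "quotient_closed R C"
  shows "(field (R\<lparr>carrier := C\<rparr>) \<or> DVR (R\<lparr>carrier := C\<rparr>)) \<and> noetherian_ring (R\<lparr>carrier := C\<rparr>)"
proof -
  interpret R: principal_domain R
    using assms(1) unfolding DVR_def by blast
  interpret S: principal_domain "R\<lparr>carrier := C\<rparr>"
    using R.principal_domain_quotient_closed_subring[OF DVR_divides_total[OF assms(1)] assms(2,3)] .
  have "divides_total (R\<lparr>carrier := C\<rparr>)"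
    using R.divides_total_quotient_closed_subring[OF DVR_divides_total[OF assms(1)] assms(2,3)] .
  then show ?thesis
    using S.field_or_DVR_if_divides_total S.noetherian_ring_axioms by blast
qed

lemma (in ring) fixed_points_subring:
  assumes hom: "\<And>g. g \<in> carrier G \<Longrightarrow> \<phi> g \<in> ring_hom R R"
  shows "subring {r \<in> carrier R. \<forall>g \<in> carrier G. \<phi> g r = r} R"
proof (rule subringI)
  show "\<one> \<in> {r \<in> carrier R. \<forall>g \<in> carrier G. \<phi> g r = r}"
    using ring_hom_one[OF hom] by simp
  fix x y assume x: "x \<in> {r \<in> carrier R. \<forall>g \<in> carrier G. \<phi> g r = r}"
    and y: "y \<in> {r \<in> carrier R. \<forall>g \<in> carrier G. \<phi> g r = r}"
  have "\<phi> g (\<ominus> x) = \<ominus> x" if g: "g \<in> carrier G" for g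
  proof -
    interpret ring_hom_ring R R "\<phi> g"
      using ring_hom_ringI2[OF ring_axioms ring_axioms hom[OF g]] .
    show ?thesis
      using x g by simp
  qed
  then show "\<ominus> x \<in> {r \<in> carrier R. \<forall>g \<in> carrier G. \<phi> g r = r}"
    using x by simp
  show "x \<otimes> y \<in> {r \<in> carrier R. \<forall>g \<in> carrier G. \<phi> g r = r}"
    using x y ring_hom_mult[OF hom] by simp
  show "x \<oplus> y \<in> {r \<in> carrier R. \<forall>g \<in> carrier G. \<phi> g r = r}"
    using x y ring_hom_add[OF hom] by simp
qed auto

lemma (in domain) fixed_points_quotient_closed:
  assumes hom: "\<And>g. g \<in> carrier G \<Longrightarrow> \<phi> g \<in> ring_hom R R"
  shows "quotient_closed R {r \<in> carrier R. \<forall>g \<in> carrier G. \<phi> g r = r}"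
  unfolding quotient_closed_def
proof (intro ballI impI)
  fix x y z
  assume x: "x \<in> {r \<in> carrier R. \<forall>g \<in> carrier G. \<phi> g r = r}"
    and y: "y \<in> {r \<in> carrier R. \<forall>g \<in> carrier G. \<phi> g r = r} - {\<zero>}"
    and z: "z \<in> carrier R" and xyz: "x = y \<otimes> z"
  have "\<phi> g z = z" if g: "g \<in> carrier G" for g
  proof -
    have "y \<otimes> \<phi> g z = \<phi> g (y \<otimes> z)"
      using y g z ring_hom_mult[OF hom[OF g]] by simp
    also have "\<dots> = y \<otimes> z"
      using x g xyz by simp
    finally show ?thesis
      using m_lcancel[of y z "\<phi> g z"] y z ring_hom_closed[OF hom[OF g] z] by simp
  qed
  then show "z \<in> {r \<in> carrier R. \<forall>g \<in> carrier G. \<phi> g r = r}"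
    using z by simp
qed

theorem mainTheorem5:
  fixes R :: "('a, 'b) ring_scheme" and G :: "('g, 'c) monoid_scheme"
    and \<phi> :: "'g \<Rightarrow> 'a \<Rightarrow> 'a"
  assumes "DVR R"
    and "group G"
    and "group_action G (carrier R) \<phi>"
    and "\<forall>g \<in> carrier G. \<phi> g \<in> ring_iso R R"
  shows "(field (invariant_ring G R \<phi>) \<or> DVR (invariant_ring G R \<phi>))
         \<and> noetherian_ring (invariant_ring G R \<phi>)"
proof -
  interpret principal_domain R
    using assms(1) unfolding DVR_def by blast
  have hom: "\<And>g. g \<in> carrier G \<Longrightarrow> \<phi> g \<in> ring_hom R R"
    using assms(4) unfolding ring_iso_def by blast
  show ?thesis
    unfolding invariant_ring_def
    using DVR_quotient_closed_subring[OF assms(1) fixed_points_subring[OF hom]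
        fixed_points_quotient_closed[OF hom]] .
qed

end
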